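(* Assume $q>2$. For all integers $d\ge0$, $$\sum_{a\in A^+(d)}\frac{a(t_1)}{a^2}=\frac{b_d(t_1)(t_1-\theta^{q^d})}{(t_1-\theta)\,l_d^2},$$ $$\sum_{a\in A^+(d)}\frac{a(t_1)a(t_2)}{a^2}=\frac{b_d(t_1)b_d(t_2)}{(t_1-\theta)(t_2-\theta)l_d^2}\Big[(t_1-\theta)(t_2-\theta)+(t_1-\theta)(\theta-\theta^{q^d})+(t_2-\theta)(\theta-\theta^{q^d})\Big].$$
   Context: $A=\mathbb{F}_q[\theta]$, $A^+(d)$ the set of monic polynomials of degree $d$; $t_1,t_2$ indeterminates and $a(t_i)$ is $a$ with $\theta$ replaced by $t_i$. $l_0=1$, $l_i=(\theta-\theta^{q^i})l_{i-1}$ for $i\ge1$; $b_0(t)=1$, $b_i(t)=\prod_{k=0}^{i-1}(t-\theta^{q^k})$ for $i\ge1$. *)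

theory Defs
  imports "HOL-Computational_Algebra.Polynomial" "HOL-Computational_Algebra.Fraction_Field"
begin

text \<open>Setting: F_q is a finite field type 'a, q = CARD('a); A = F_q[theta] is 'a poly,
  theta = [:0,1:].  K1 = F_q(theta)(t1) is the rational function field
  ('a poly fract) poly fract, and K2 = K1(t2) is K1 poly fract.\<close>

type_synonym 'a K1 = "'a poly fract poly fract"
type_synonym 'a K2 = "'a poly fract poly fract poly fract"

definition Aplus :: "nat \<Rightarrow> ('a::field) poly set" where
  "Aplus d = {a. lead_coeff a = 1 \<and> degree a = d}"

fun lcar :: "nat \<Rightarrow> ('a::{finite,field}) poly" where
  "lcar 0 = 1"
| "lcar (Suc i) = ([:0,1:] - [:0,1:] ^ (card (UNIV :: 'a set) ^ Suc i)) * lcar i"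

definition bcar :: "nat \<Rightarrow> nat \<Rightarrow> 'b::comm_ring_1 \<Rightarrow> 'b \<Rightarrow> 'b" where
  "bcar q i t th = (\<Prod>k<i. (t - th ^ (q ^ k)))"

definition to_fract :: "'b::idom \<Rightarrow> 'b fract" where "to_fract x = Fract x 1"

definition const1 :: "'a::field \<Rightarrow> 'a K1" where
  "const1 c = to_fract [: to_fract [:c:] :]"
definition const2 :: "'a::field \<Rightarrow> 'a K2" where
  "const2 c = to_fract [: const1 c :]"

definition theta1 :: "'a::field K1" where "theta1 = to_fract [: to_fract [:0,1:] :]"
definition t1_1 :: "'a::field K1" where "t1_1 = to_fract [:0,1:]"
definition theta2 :: "'a::field K2" where "theta2 = to_fract [: theta1 :]"
definition t1_2 :: "'a::field K2" where "t1_2 = to_fract [: t1_1 :]"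
definition t2_2 :: "'a::field K2" where "t2_2 = to_fract [:0,1:]"

definition evA :: "('a::field \<Rightarrow> 'b::comm_ring_1) \<Rightarrow> 'a poly \<Rightarrow> 'b \<Rightarrow> 'b" where
  "evA c a x = poly (map_poly c a) x"

end

theory Submission
  imports Defs
begin

text \<open>
  Write \<open>a \<in> A\<^sup>+(d)\<close> as \<open>\<theta>\<^sup>d + v\<close> with \<open>deg v < d\<close>. Both sums are instances of one identity
  for \<open>\<Sum>\<^sub>v (r + L v) (s + K v) / (x + v(\<theta>))\<^sup>2\<close> with \<open>\<bbbF>\<^sub>q\<close>-linear \<open>L, K\<close>, proved by induction
  on \<open>d\<close>: fixing the coefficient \<open>c\<close> of \<open>\<theta>\<^sup>d\<close> gives an instance of the induction hypothesis
  which is a quadratic polynomial in \<open>1 / (z + c)\<close>, and over \<open>\<bbbF>\<^sub>q\<close> one has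
  \<open>\<Sum>\<^sub>c 1 / (z + c) = -1 / (z\<^sup>q - z)\<close> and, for \<open>q > 2\<close>, \<open>\<Sum>\<^sub>c 1 / (z + c)\<^sup>2 = 1 / (z\<^sup>q - z)\<^sup>2\<close>.
  The constants are governed by Carlitz's \<open>\<bbbF>\<^sub>q\<close>-linear polynomials \<open>e\<^sub>d\<close>, obtained by iterating
  \<open>z \<mapsto> z\<^sup>q - z\<close>; their values at powers of \<open>\<theta>\<close> are complete homogeneous symmetric
  polynomials in \<open>\<theta>, \<theta>\<^sup>q, \<theta>\<^sup>q\<^sup>2, \<dots>\<close>, which relates \<open>e\<^sub>d(\<theta>\<^sup>d)\<close> to \<open>l\<^sub>d\<close> and, through Newton
  interpolation of \<open>t\<^sup>d\<close> at the nodes \<open>\<theta>\<^sup>q\<^sup>k\<close>, makes \<open>b\<^sub>d(t)\<close> appear.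
\<close>

section \<open>Sums over a finite field\<close>

lemma finite_field_power_card:
  fixes x :: "'a::{finite,field}"
  shows "x ^ card (UNIV :: 'a set) = x"
proof (cases "x = 0")
  case True
  then show ?thesis
    using finite_UNIV_card_ge_0[where 'a = 'a] by simp
next
  case False
  define U where "U = UNIV - {0::'a}"
  have "x ^ card U * (\<Prod>y\<in>U. y) = (\<Prod>y\<in>U. x * y)"
    by (simp only: prod.distrib prod_constant)
  also have "\<dots> = (\<Prod>y\<in>U. y)"
    unfolding U_def
    by (rule prod.reindex_bij_witness[of _ "\<lambda>y. y / x" "\<lambda>y. x * y"]) (use False in auto)
  finally have "x ^ card U = 1"
    by (simp add: U_def)
  moreover have "card (UNIV :: 'a set) = Suc (card U)"
    unfolding U_def using finite_UNIV_card_ge_0[where 'a = 'a] by (simp add: card_Diff_singleton)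
  ultimately show ?thesis
    by simp
qed

lemma sum_UNIV_finite_field_eq_0:
  assumes "card (UNIV :: 'a::{finite,field} set) > 2"
  shows "(\<Sum>c\<in>(UNIV :: 'a set). c) = 0"
proof -
  obtain l :: 'a where l: "l \<noteq> 0" "l \<noteq> 1"
  proof -
    have "card {0, 1 :: 'a} \<le> 2"
      by (simp add: card_insert_if)
    then have "\<not> (UNIV :: 'a set) \<subseteq> {0, 1}"
      using assms card_mono[of "{0, 1 :: 'a}" UNIV] by auto
    then show ?thesis
      using that by blast
  qed
  have "(\<Sum>c\<in>(UNIV :: 'a set). c) = (\<Sum>c\<in>UNIV. l * c)"
    by (rule sum.reindex_bij_witness[of _ "\<lambda>y. l * y" "\<lambda>y. y / l"]) (use l in auto)
  also have "\<dots> = l * (\<Sum>c\<in>UNIV. c)"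
    by (simp add: sum_distrib_left)
  finally have "(l - 1) * (\<Sum>c\<in>(UNIV :: 'a set). c) = 0"
    by (simp add: algebra_simps)
  then show ?thesis
    using l by simp
qed

lemma sum_inverse_diff_eq_0:
  assumes "card (UNIV :: 'a::{finite,field} set) > 2"
  shows "(\<Sum>c'\<in>(UNIV :: 'a set) - {c}. 1 / (c' - c)) = 0"
proof -
  have "(\<Sum>c'\<in>(UNIV :: 'a set) - {c}. 1 / (c' - c)) = (\<Sum>u\<in>UNIV - {0}. 1 / u)"
    by (rule sum.reindex_bij_witness[of _ "\<lambda>u. u + c" "\<lambda>c'. c' - c"]) auto
  also have "\<dots> = (\<Sum>u\<in>UNIV - {0}. u)"
    by (rule sum.reindex_bij_witness[of _ "\<lambda>u. 1 / u" "\<lambda>u. 1 / u"]) auto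
  also have "\<dots> = (\<Sum>u\<in>UNIV. u)"
    by (rule sum.mono_neutral_left) auto
  finally show ?thesis
    using sum_UNIV_finite_field_eq_0[OF assms] by simp
qed

text \<open>By partial fractions \<open>1 / (w c * w c') = (1 / w c - 1 / w c') / (w c' - w c)\<close>.\<close>

lemma sum_off_diagonal_inverse_products:
  fixes w :: "'a::finite \<Rightarrow> 'b::field"
  assumes "inj w" and nonzero: "\<And>c. w c \<noteq> 0"
    and sum_inverse_diffs: "\<And>c. (\<Sum>c'\<in>UNIV - {c}. 1 / (w c' - w c)) = 0"
  shows "(\<Sum>c\<in>UNIV. \<Sum>c'\<in>UNIV - {c}. 1 / w c * (1 / w c')) = 0"
proof -
  have partial_fractions: "1 / w c * (1 / w c')
      = 1 / w c * (1 / (w c' - w c)) + 1 / w c' * (1 / (w c - w c'))" if "c' \<noteq> c" for c c'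
  proof -
    have "w c' - w c \<noteq> 0"
      using \<open>inj w\<close> that by (auto dest: injD)
    then show ?thesis
      using nonzero[of c] nonzero[of c'] by (simp add: divide_simps) (simp add: algebra_simps)
  qed
  have "(\<Sum>c\<in>UNIV. \<Sum>c'\<in>UNIV - {c}. 1 / w c' * (1 / (w c - w c')))
      = (\<Sum>c'\<in>UNIV. \<Sum>c\<in>UNIV - {c'}. 1 / w c' * (1 / (w c - w c')))"
  proof -
    have "UNIV - {c} = {c'. c' \<in> UNIV \<and> c' \<noteq> c}" "UNIV - {c} = {c'. c' \<in> UNIV \<and> c \<noteq> c'}" for c :: 'a
      by auto
    then show ?thesis
      using sum.swap_restrict[of "UNIV :: 'a set" UNIV "\<lambda>c c'. 1 / w c' * (1 / (w c - w c'))"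
          "\<lambda>c c'. c' \<noteq> c"]
      by simp
  qed
  also have "\<dots> = 0"
    by (simp only: sum_distrib_left[symmetric] sum_inverse_diffs mult_zero_right sum.neutral_const)
  finally have swapped: "(\<Sum>c\<in>UNIV. \<Sum>c'\<in>UNIV - {c}. 1 / w c' * (1 / (w c - w c'))) = 0" .
  have "(\<Sum>c\<in>UNIV. \<Sum>c'\<in>UNIV - {c}. 1 / w c * (1 / w c'))
      = (\<Sum>c\<in>UNIV. \<Sum>c'\<in>UNIV - {c}. 1 / w c * (1 / (w c' - w c)) + 1 / w c' * (1 / (w c - w c')))"
    by (intro sum.cong refl partial_fractions) auto
  also have "\<dots> = (\<Sum>c\<in>UNIV. 1 / w c * (\<Sum>c'\<in>UNIV - {c}. 1 / (w c' - w c)))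
      + (\<Sum>c\<in>UNIV. \<Sum>c'\<in>UNIV - {c}. 1 / w c' * (1 / (w c - w c')))"
    by (simp only: sum.distrib sum_distrib_left)
  finally show ?thesis
    by (simp only: sum_inverse_diffs swapped mult_zero_right sum.neutral_const add_0)
qed

lemma of_nat_card_eq_0: "of_nat (card (UNIV :: 'a::{finite,field} set)) = (0 :: 'a)"
proof -
  have "(\<Sum>c\<in>(UNIV :: 'a set). c) = (\<Sum>c\<in>UNIV. c + 1)"
    by (rule sum.reindex_bij_witness[of _ "\<lambda>c. c + 1" "\<lambda>c. c - 1"]) auto
  then show ?thesis
    by (simp add: sum.distrib)
qed

locale Fq_embedding =
  fixes \<iota> :: "'a::{finite,field} \<Rightarrow> 'b::field" and q :: nat
  assumes hom_add: "\<iota> (x + y) = \<iota> x + \<iota> y"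
    and hom_mult: "\<iota> (x * y) = \<iota> x * \<iota> y"
    and hom_one: "\<iota> 1 = 1"
    and inj: "inj \<iota>"
    and q_eq_card: "q = card (UNIV :: 'a set)"
    and q_gt_2: "q > 2"
begin

lemma hom_zero [simp]: "\<iota> 0 = 0"
  using hom_add[of 0 0] by (metis add_cancel_left_right)

lemma hom_uminus [simp]: "\<iota> (- x) = - \<iota> x"
  using hom_add[of x "- x"] by (simp add: eq_neg_iff_add_eq_0 add.commute)

lemma hom_diff [simp]: "\<iota> (x - y) = \<iota> x - \<iota> y"
  using hom_add[of x "- y"] by simp

lemma hom_eq_iff [simp]: "\<iota> x = \<iota> y \<longleftrightarrow> x = y"
  using inj by (auto dest: injD)

lemma hom_eq_0_iff [simp]: "\<iota> x = 0 \<longleftrightarrow> x = 0"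
  using hom_eq_iff[of x 0] by simp

lemma hom_divide [simp]: "\<iota> (x / y) = \<iota> x / \<iota> y"
proof (cases "y = 0")
  case False
  then have "\<iota> (x / y) * \<iota> y = \<iota> x"
    by (simp flip: hom_mult)
  then show ?thesis
    using False by (simp add: eq_divide_eq)
qed simp

lemma hom_power [simp]: "\<iota> (x ^ n) = \<iota> x ^ n"
  by (induction n) (simp_all add: hom_one hom_mult)

lemma hom_sum: "\<iota> (sum f A) = (\<Sum>x\<in>A. \<iota> (f x))"
  by (induction A rule: infinite_finite_induct) (simp_all add: hom_add)

lemma of_nat_q_eq_0: "(of_nat q :: 'b) = 0"
proof -
  have "(of_nat q :: 'a) = 0"
    using of_nat_card_eq_0 q_eq_card by simp
  moreover have "\<iota> (of_nat n) = of_nat n" for n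
    by (induction n) (simp_all add: hom_add hom_one)
  ultimately show ?thesis
    by (metis hom_zero)
qed

lemma hom_power_q [simp]: "\<iota> c ^ q = \<iota> c"
  by (metis hom_power finite_field_power_card q_eq_card)

definition vanish :: "'b \<Rightarrow> 'b" where
  "vanish z = (\<Prod>c\<in>UNIV. z + \<iota> c)"

lemma vanish_eq_0_iff: "vanish z = 0 \<longleftrightarrow> z \<in> range \<iota>"
proof -
  have "vanish z = 0 \<longleftrightarrow> (\<exists>c. z = \<iota> (- c))"
    by (simp add: vanish_def add_eq_0_iff2)
  also have "\<dots> \<longleftrightarrow> z \<in> range \<iota>"
    by (metis minus_minus rangeE rangeI)
  finally show ?thesis .
qed

lemma vanish_nonzero_imp_shift_nonzero: "vanish z \<noteq> 0 \<Longrightarrow> z + \<iota> c \<noteq> 0"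
  using vanish_eq_0_iff by (metis add_eq_0_iff2 hom_uminus rangeI)

lemma vanish_shift [simp]: "vanish (z + \<iota> c) = vanish z"
  unfolding vanish_def
  by (rule prod.reindex_bij_witness[of _ "\<lambda>c'. c' - c" "\<lambda>c'. c' + c"]) (simp_all add: hom_add add.assoc)

lemma degree_prod_linear_factors:
  fixes f :: "'a \<Rightarrow> 'b"
  shows "degree (\<Prod>c\<in>UNIV. [:f c, 1:]) = q"
  unfolding q_eq_card by (subst degree_prod_eq_sum_degree) auto

lemma coeff_prod_linear_factors:
  fixes f :: "'a \<Rightarrow> 'b"
  shows "coeff (\<Prod>c\<in>UNIV. [:f c, 1:]) q = 1"
  using lead_coeff_prod[of "\<lambda>c. [:f c, 1:]" UNIV] by (simp add: degree_prod_linear_factors)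

lemma prod_linear_factors_eq:
  "(\<Prod>c\<in>UNIV. [:\<iota> c, 1:]) = monom 1 q - [:0, 1:]"
proof (rule poly_eqI_degree_lead_coeff[where n = q and A = "range (\<lambda>c. - \<iota> c)"])
  show "coeff (\<Prod>c\<in>UNIV. [:\<iota> c, 1:]) q = coeff (monom 1 q - [:0, 1:]) q"
    using q_gt_2 coeff_prod_linear_factors by (simp add: coeff_pCons split: nat.split)
  show "degree (\<Prod>c\<in>UNIV. [:\<iota> c, 1:]) \<le> q"
    by (simp add: degree_prod_linear_factors)
  show "degree (monom 1 q - [:0, 1:] :: 'b poly) \<le> q"
    by (rule degree_diff_le) (use q_gt_2 in \<open>simp_all add: degree_monom_eq\<close>)
  show "q \<le> card (range (\<lambda>c. - \<iota> c))"
    by (simp add: card_image inj_on_def q_eq_card)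
  fix z assume "z \<in> range (\<lambda>c. - \<iota> c)"
  then obtain c where z: "z = - \<iota> c" by auto
  have "poly (\<Prod>c\<in>UNIV. [:\<iota> c, 1:]) z = 0"
    by (simp add: poly_prod z)
  moreover have "z ^ q = z"
    using hom_power_q[of "- c"] by (simp add: z)
  ultimately show "poly (\<Prod>c\<in>UNIV. [:\<iota> c, 1:]) z = poly (monom 1 q - [:0, 1:]) z"
    by (simp add: poly_monom)
qed

lemma vanish_eq: "vanish z = z ^ q - z"
  using arg_cong[OF prod_linear_factors_eq, of "\<lambda>p. poly p z"]
  by (simp add: vanish_def poly_prod poly_monom add.commute)

text \<open>Additivity of \<open>vanish\<close>: the polynomial \<open>vanish (X + b) - vanish X - vanish b\<close> has degree
  less than \<open>q\<close> but vanishes on the \<open>q\<close> points \<open>- \<iota> c\<close>.\<close>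

lemma vanish_add: "vanish (a + b) = vanish a + vanish b"
proof -
  define G where "G = (\<Prod>c\<in>UNIV. [:b + \<iota> c, 1:]) - (\<Prod>c\<in>UNIV. [:\<iota> c, 1:]) - [:vanish b:]"
  have poly_G: "poly G z = vanish (z + b) - vanish z - vanish b" for z
    by (simp add: G_def vanish_def poly_prod algebra_simps)
  have "G = 0"
  proof (rule poly_eqI_degree_lead_coeff[where n = q and A = "range (\<lambda>c. - \<iota> c)"])
    show "coeff G q = coeff 0 q"
      using q_gt_2 by (simp add: G_def coeff_prod_linear_factors coeff_pCons split: nat.split)
    show "degree G \<le> q"
      unfolding G_def by (intro degree_diff_le) (simp_all add: degree_prod_linear_factors)
    show "q \<le> card (range (\<lambda>c. - \<iota> c))"
      by (simp add: card_image inj_on_def q_eq_card)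
    fix z assume "z \<in> range (\<lambda>c. - \<iota> c)"
    then obtain c where z: "z = \<iota> (- c)" by auto
    then have "vanish z = 0"
      using vanish_eq_0_iff by blast
    then show "poly G z = poly 0 z"
      using vanish_shift[of b "- c"] by (simp add: poly_G z add.commute)
  qed simp
  then have "vanish (a + b) - vanish a - vanish b = 0"
    using poly_G[of a] by simp
  then show ?thesis
    by (simp add: algebra_simps)
qed

lemma frobenius_add:
  fixes a b :: 'b
  shows "(a + b) ^ q = a ^ q + b ^ q"
  using vanish_add[of a b] by (simp add: vanish_eq algebra_simps)

lemma vanish_smult: "vanish (\<iota> c * z) = \<iota> c * vanish z"
  by (simp add: vanish_eq power_mult_distrib right_diff_distrib)

lemma sum_prod_omit_eq: "(\<Sum>c\<in>UNIV. \<Prod>c'\<in>UNIV - {c}. z + \<iota> c') = -1"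
proof -
  have "pderiv (monom 1 q - [:0, 1:] :: 'b poly) = monom (of_nat q) (q - 1) - 1"
    by (simp add: pderiv_monom pderiv_diff pderiv_pCons one_pCons)
  then have "pderiv (monom 1 q - [:0, 1:] :: 'b poly) = - 1"
    by (simp add: of_nat_q_eq_0)
  then have "poly (pderiv (\<Prod>c\<in>UNIV. [:\<iota> c, 1:])) z = -1"
    by (simp add: prod_linear_factors_eq)
  then show ?thesis
    by (simp add: pderiv_prod poly_sum poly_prod pderiv_pCons add.commute)
qed

lemma sum_inverse_shifts:
  assumes "vanish z \<noteq> 0"
  shows "(\<Sum>c\<in>UNIV. 1 / (z + \<iota> c)) = - 1 / vanish z"
proof -
  have "vanish z / (z + \<iota> c) = (\<Prod>c'\<in>UNIV - {c}. z + \<iota> c')" for c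
  proof -
    have "vanish z = (z + \<iota> c) * (\<Prod>c'\<in>UNIV - {c}. z + \<iota> c')"
      unfolding vanish_def by (rule prod.remove) auto
    then show ?thesis
      using assms by auto
  qed
  then have "vanish z * (\<Sum>c\<in>UNIV. 1 / (z + \<iota> c)) = -1"
    by (simp add: sum_distrib_left sum_prod_omit_eq)
  then show ?thesis
    using assms by (simp add: field_simps)
qed

lemma sum_inverse_shifts_squared:
  assumes "vanish z \<noteq> 0"
  shows "(\<Sum>c\<in>UNIV. 1 / (z + \<iota> c) ^ 2) = 1 / vanish z ^ 2"
proof -
  define f where "f c = 1 / (z + \<iota> c)" for c
  have cross_terms: "(\<Sum>c\<in>UNIV. \<Sum>c'\<in>UNIV - {c}. f c * f c') = 0"
    unfolding f_def
  proof (rule sum_off_diagonal_inverse_products)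
    show "inj (\<lambda>c. z + \<iota> c)"
      by (simp add: inj_def)
    show "z + \<iota> c \<noteq> 0" for c
      using assms by (rule vanish_nonzero_imp_shift_nonzero)
    show "(\<Sum>c'\<in>UNIV - {c}. 1 / (z + \<iota> c' - (z + \<iota> c))) = 0" for c
    proof -
      have "(\<Sum>c'\<in>UNIV - {c}. 1 / (z + \<iota> c' - (z + \<iota> c))) = \<iota> (\<Sum>c'\<in>UNIV - {c}. 1 / (c' - c))"
        by (simp add: hom_sum hom_one)
      then show ?thesis
        using sum_inverse_diff_eq_0[of c] q_gt_2 by (simp add: q_eq_card)
    qed
  qed
  have "(\<Sum>c\<in>UNIV. f c) ^ 2 = (\<Sum>c\<in>UNIV. \<Sum>c'\<in>UNIV. f c * f c')"
    by (simp add: power2_eq_square sum_product)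
  also have "\<dots> = (\<Sum>c\<in>UNIV. f c * f c + (\<Sum>c'\<in>UNIV - {c}. f c * f c'))"
    by (intro sum.cong refl sum.remove) auto
  also have "\<dots> = (\<Sum>c\<in>UNIV. f c ^ 2)"
    by (simp add: sum.distrib cross_terms power2_eq_square)
  finally show ?thesis
    using sum_inverse_shifts[OF assms] by (simp add: f_def power_one_over)
qed

lemma sum_quadratic_in_inverse_shifts:
  assumes "vanish z \<noteq> 0"
  shows "(\<Sum>c\<in>UNIV. K + A / (z + \<iota> c) + B / (z + \<iota> c) ^ 2) = - A / vanish z + B / vanish z ^ 2"
proof -
  have "(\<Sum>c\<in>(UNIV :: 'a set). K) = of_nat q * K"
    by (simp add: q_eq_card)
  then have "(\<Sum>c\<in>UNIV. K + A / (z + \<iota> c) + B / (z + \<iota> c) ^ 2)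
      = A * (\<Sum>c\<in>UNIV. 1 / (z + \<iota> c)) + B * (\<Sum>c\<in>UNIV. 1 / (z + \<iota> c) ^ 2)"
    by (simp add: sum.distrib sum_distrib_left of_nat_q_eq_0)
  then show ?thesis
    by (simp add: sum_inverse_shifts[OF assms] sum_inverse_shifts_squared[OF assms])
qed

end

section \<open>Polynomials of bounded degree\<close>

definition polys_below :: "nat \<Rightarrow> 'a::zero poly set" where
  "polys_below d = {v. \<forall>i\<ge>d. coeff v i = 0}"

lemma polys_below_0 [simp]: "polys_below 0 = {0}"
  by (auto simp: polys_below_def poly_eq_iff)

lemma bij_betw_polys_below_Suc:
  "bij_betw (\<lambda>(c, w). w + monom c d) (UNIV \<times> polys_below d)
     (polys_below (Suc d) :: 'a::comm_ring_1 poly set)"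
proof (rule bij_betw_byWitness[where f' = "\<lambda>v. (coeff v d, v - monom (coeff v d) d)"])
  show "\<forall>a\<in>UNIV \<times> polys_below d.
      (\<lambda>v. (coeff v d, v - monom (coeff v d) d)) ((\<lambda>(c, w). w + monom c d) a) = a"
    by (auto simp: polys_below_def)
  show "\<forall>v\<in>polys_below (Suc d) :: 'a poly set.
      (\<lambda>(c, w). w + monom c d) ((\<lambda>v. (coeff v d, v - monom (coeff v d) d)) v) = v"
    by auto
  show "(\<lambda>(c, w). w + monom c d) ` (UNIV \<times> polys_below d) \<subseteq> polys_below (Suc d)"
    by (auto simp: polys_below_def)
  show "(\<lambda>v. (coeff v d, v - monom (coeff v d) d)) ` polys_below (Suc d) \<subseteq> UNIV \<times> polys_below d"
    by (auto simp: polys_below_def le_Suc_eq)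
qed

lemma sum_polys_below_Suc:
  "(\<Sum>v\<in>polys_below (Suc d). f v)
     = (\<Sum>c\<in>UNIV. \<Sum>w\<in>(polys_below d :: 'a::comm_ring_1 poly set). f (w + monom c d))"
  using sum.reindex_bij_betw[OF bij_betw_polys_below_Suc[of d], of f]
  by (simp add: sum.cartesian_product case_prod_beta')

lemma Aplus_eq_image: "Aplus d = (\<lambda>v. monom 1 d + v) ` (polys_below d :: 'a::field poly set)"
proof (intro set_eqI iffI)
  fix a :: "'a poly"
  assume "a \<in> Aplus d"
  then have "a - monom 1 d \<in> polys_below d"
    by (auto simp: Aplus_def polys_below_def coeff_eq_0)
  then show "a \<in> (\<lambda>v. monom 1 d + v) ` polys_below d"
    by (intro image_eqI[of _ _ "a - monom 1 d"]) auto
next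
  fix a :: "'a poly"
  assume "a \<in> (\<lambda>v. monom 1 d + v) ` polys_below d"
  then have coeff_a: "coeff a i = (if i = d then 1 else 0)" if "i \<ge> d" for i
    using that by (auto simp: polys_below_def)
  have "degree a = d"
    using coeff_a[of d] by (intro antisym degree_le le_degree) (auto simp: coeff_a)
  then show "a \<in> Aplus d"
    using coeff_a[of d] by (simp add: Aplus_def)
qed

lemma sum_Aplus:
  "(\<Sum>a\<in>Aplus d. f a) = (\<Sum>v\<in>(polys_below d :: 'a::field poly set). f (monom 1 d + v))"
  unfolding Aplus_eq_image by (subst sum.reindex) (auto simp: inj_on_def)

context Fq_embedding
begin

lemma evA_add: "evA \<iota> (a + b) x = evA \<iota> a x + evA \<iota> b x"
proof -
  have "map_poly \<iota> (a + b) = map_poly \<iota> a + map_poly \<iota> b"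
    by (intro poly_eqI) (simp add: coeff_map_poly hom_add)
  then show ?thesis
    by (simp add: evA_def)
qed

lemma evA_smult: "evA \<iota> (smult c a) x = \<iota> c * evA \<iota> a x"
  by (simp add: evA_def map_poly_smult hom_mult)

lemma evA_monom: "evA \<iota> (monom c n) x = \<iota> c * x ^ n"
  by (simp add: evA_def map_poly_monom poly_monom)

lemma evA_pCons_0: "evA \<iota> (pCons 0 a) x = x * evA \<iota> a x"
  by (simp add: evA_def map_poly_pCons)

lemma evA_mult: "evA \<iota> (a * b) x = evA \<iota> a x * evA \<iota> b x"
proof (induction a)
  case (pCons c a)
  have "pCons c a * b = smult c b + pCons 0 (a * b)"
    by simp
  then have "evA \<iota> (pCons c a * b) x = \<iota> c * evA \<iota> b x + x * (evA \<iota> a x * evA \<iota> b x)"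
    by (simp add: evA_add evA_smult evA_pCons_0 pCons.IH)
  moreover have "evA \<iota> (pCons c a) x = \<iota> c + x * evA \<iota> a x"
    by (simp add: evA_def map_poly_pCons)
  ultimately show ?case
    by (simp add: algebra_simps)
qed (simp add: evA_def)

lemma evA_one: "evA \<iota> 1 x = 1"
  by (simp add: evA_def hom_one)

lemma evA_power: "evA \<iota> (a ^ n) x = evA \<iota> a x ^ n"
  by (induction n) (simp_all add: evA_one evA_mult)

lemma evA_diff: "evA \<iota> (a - b) x = evA \<iota> a x - evA \<iota> b x"
  using evA_add[of "a - b" b x] by simp

lemma evA_X: "evA \<iota> [:0, 1:] x = x"
  by (simp add: evA_def map_poly_pCons hom_one)

definition Fq_linear :: "('a poly \<Rightarrow> 'b) \<Rightarrow> bool" where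
  "Fq_linear L \<longleftrightarrow> (\<forall>a b. L (a + b) = L a + L b) \<and> (\<forall>c a. L (smult c a) = \<iota> c * L a)"

lemma Fq_linear_shift:
  assumes "Fq_linear L"
  shows "L (w + monom c d) = L w + \<iota> c * L (monom 1 d)"
proof -
  have "L (monom c d) = \<iota> c * L (monom 1 d)"
    using assms smult_monom[of c 1 d] unfolding Fq_linear_def by (metis mult.right_neutral)
  then show ?thesis
    using assms by (simp add: Fq_linear_def)
qed

lemma Fq_linear_evA: "Fq_linear (\<lambda>a. evA \<iota> a t)"
  by (simp add: Fq_linear_def evA_add evA_smult)

lemma Fq_linear_zero: "Fq_linear (\<lambda>a. 0)"
  by (simp add: Fq_linear_def)

lemma Fq_linear_0: "Fq_linear L \<Longrightarrow> L 0 = 0"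
  unfolding Fq_linear_def by (metis add_cancel_right_right)

end

section \<open>Complete homogeneous symmetric polynomials\<close>

fun hcomplete :: "nat \<Rightarrow> 'a::comm_ring_1 list \<Rightarrow> 'a" where
  "hcomplete 0 xs = 1"
| "hcomplete (Suc m) [] = 0"
| "hcomplete (Suc m) (x # xs) = hcomplete (Suc m) xs + x * hcomplete m (x # xs)"

lemma hcomplete_singleton: "hcomplete m [t] = t ^ m"
  by (induction m) simp_all

lemma hcomplete_diff:
  "hcomplete (Suc m) (a # ys) - hcomplete (Suc m) (b # ys) = (a - b) * hcomplete m (a # b # ys)"
proof (induction m)
  case (Suc m)
  have "hcomplete (Suc (Suc m)) (a # ys) - hcomplete (Suc (Suc m)) (b # ys)
      = (a - b) * hcomplete (Suc m) (a # ys)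
        + b * (hcomplete (Suc m) (a # ys) - hcomplete (Suc m) (b # ys))"
    by (simp add: algebra_simps)
  also have "\<dots> = (a - b) * (hcomplete (Suc m) (a # ys) + b * hcomplete m (a # b # ys))"
    unfolding Suc.IH by (simp add: algebra_simps del: hcomplete.simps)
  also have "hcomplete (Suc m) (a # ys) + b * hcomplete m (a # b # ys)
      = hcomplete (Suc m) (b # ys) + a * hcomplete m (a # b # ys)"
    using Suc.IH by (simp add: algebra_simps del: hcomplete.simps)
  finally show ?case
    by simp
qed simp

lemma hcomplete_swap: "hcomplete m (x # y # xs) = hcomplete m (y # x # xs)"
proof (induction m)
  case (Suc m)
  have "hcomplete (Suc m) (y # xs) - hcomplete (Suc m) (x # xs) = (y - x) * hcomplete m (y # x # xs)"
    by (rule hcomplete_diff)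
  then show ?case
    using Suc.IH by (simp add: algebra_simps)
qed simp

lemma hcomplete_cons_cong:
  "(\<And>m. hcomplete m xs = hcomplete m ys) \<Longrightarrow> hcomplete m (a # xs) = hcomplete m (a # ys)"
  by (induction m) simp_all

lemma hcomplete_snoc: "hcomplete m (xs @ [y]) = hcomplete m (y # xs)"
proof (induction xs arbitrary: m)
  case (Cons x xs)
  show ?case
  proof (induction m)
    case (Suc m)
    have "hcomplete (Suc m) ((x # xs) @ [y])
        = hcomplete (Suc m) (y # xs) + x * hcomplete m (y # x # xs)"
      using Cons.IH Suc.IH by simp
    also have "\<dots> = hcomplete (Suc m) (x # y # xs)"
      by (simp add: hcomplete_swap)
    finally show ?case
      by (simp only: hcomplete_swap)
  qed simp
qed simp

lemma hcomplete_diff_snoc: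
  "hcomplete (Suc m) (a # zs) - hcomplete (Suc m) (zs @ [b]) = (a - b) * hcomplete m (a # zs @ [b])"
proof -
  have "hcomplete m (a # zs @ [b]) = hcomplete m (a # b # zs)"
    by (rule hcomplete_cons_cong) (rule hcomplete_snoc)
  then show ?thesis
    using hcomplete_diff[of m a zs b] by (simp add: hcomplete_snoc)
qed

lemma (in Fq_embedding) hcomplete_map_power_q: "hcomplete m (map (\<lambda>x. x ^ q) xs) = (hcomplete m xs :: 'b) ^ q"
  using q_gt_2 by (induction m xs rule: hcomplete.induct) (simp_all add: frobenius_add power_mult_distrib)

section \<open>Carlitz polynomials at a transcendental element\<close>

lemma power_power_Suc: "(x ^ m ^ n) ^ m = (x :: 'a::monoid_mult) ^ m ^ Suc n"
  by (simp only: power_Suc2 power_mult)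

lemma bcar_Suc: "bcar q (Suc i) t th = bcar q i t th * (t - th ^ q ^ i)"
  by (simp add: bcar_def)

lemma expand_in_inverse_powers:
  fixes a E u M1 M2 k1 k2 l1 l2 :: "'a::field"
  assumes "E \<noteq> 0" "u \<noteq> 0"
  shows "(a / (E * u)) ^ 2 * (M1 + k1 * E * u) * (M2 + k2 * E * u)
      + a / (E * u) * (l1 * (M2 + k2 * E * u) + l2 * (M1 + k1 * E * u))
    = (a ^ 2 * k1 * k2 + a * (l1 * k2 + l2 * k1))
      + a / E * ((l2 + a * k2) * M1 + (l1 + a * k1) * M2) / u
      + (a / E) ^ 2 * M1 * M2 / u ^ 2"
  using assms by (simp add: field_simps power2_eq_square)

locale Fq_transcendental = Fq_embedding \<iota> q for \<iota> :: "'a::{finite,field} \<Rightarrow> 'b::field" and q +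
  fixes \<theta> :: 'b
  assumes evA_theta_nonzero: "a \<noteq> 0 \<Longrightarrow> evA \<iota> a \<theta> \<noteq> 0"
begin

definition thetas :: "nat \<Rightarrow> 'b list" where
  "thetas n = map (\<lambda>i. \<theta> ^ q ^ i) [0..<n]"

definition htheta :: "nat \<Rightarrow> nat \<Rightarrow> 'b" where
  "htheta d m = hcomplete m (thetas (Suc d))"

definition lprod :: "nat \<Rightarrow> 'b" where
  "lprod d = (\<Prod>i<d. \<theta> - \<theta> ^ q ^ Suc i)"

text \<open>Up to a constant factor, \<open>ecar d\<close> is Carlitz's \<open>\<bbbF>\<^sub>q\<close>-linear polynomial
  \<open>\<Prod>v\<in>polys_below d. (x + v(\<theta>))\<close>; normalising by the value at \<open>\<theta>\<^sup>d\<close> makes the recursion a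
  plain composition with \<open>vanish z = z\<^sup>q - z\<close>. \<open>alpha d\<close> is the coefficient of \<open>x\<close> in \<open>ecar d\<close>.\<close>

fun ecar :: "nat \<Rightarrow> 'b \<Rightarrow> 'b" where
  "ecar 0 x = x"
| "ecar (Suc d) x = vanish (ecar d x / ecar d (\<theta> ^ d))"

fun alpha :: "nat \<Rightarrow> 'b" where
  "alpha 0 = 1"
| "alpha (Suc d) = - alpha d / ecar d (\<theta> ^ d)"

lemma thetas_Suc: "thetas (Suc n) = \<theta> # map (\<lambda>x. x ^ q) (thetas n)"
  unfolding thetas_def
  by (simp add: upt_conv_Cons map_Suc_upt[symmetric] power_power_Suc del: upt_Suc)

lemma thetas_Suc_snoc: "thetas (Suc n) = thetas n @ [\<theta> ^ q ^ n]"
  by (simp add: thetas_def)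

lemma htheta_0 [simp]: "htheta d 0 = 1"
  by (simp add: htheta_def)

lemma htheta_step: "htheta d (Suc m) - htheta d (Suc m) ^ q = (\<theta> - \<theta> ^ q ^ Suc d) * htheta (Suc d) m"
proof -
  define Z where "Z = map (\<lambda>x. x ^ q) (thetas d)"
  have htheta_eq: "htheta d (Suc m) = hcomplete (Suc m) (\<theta> # Z)"
    by (simp only: htheta_def thetas_Suc Z_def)
  have htheta_power_eq: "htheta d (Suc m) ^ q = hcomplete (Suc m) (Z @ [\<theta> ^ q ^ Suc d])"
    by (simp only: htheta_def hcomplete_map_power_q[symmetric] thetas_Suc_snoc Z_def map_append
        list.map power_power_Suc)
  have thetas_eq: "thetas (Suc (Suc d)) = \<theta> # Z @ [\<theta> ^ q ^ Suc d]"
    by (simp only: thetas_Suc[of "Suc d"] thetas_Suc_snoc[of d] Z_def map_append list.map power_power_Suc)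
  have "htheta d (Suc m) - htheta d (Suc m) ^ q
      = hcomplete (Suc m) (\<theta> # Z) - hcomplete (Suc m) (Z @ [\<theta> ^ q ^ Suc d])"
    unfolding htheta_power_eq by (simp only: htheta_eq)
  also have "\<dots> = (\<theta> - \<theta> ^ q ^ Suc d) * hcomplete m (\<theta> # Z @ [\<theta> ^ q ^ Suc d])"
    by (rule hcomplete_diff_snoc)
  finally show ?thesis
    by (simp only: htheta_def thetas_eq)
qed

lemma lprod_Suc: "lprod (Suc d) = lprod d * (\<theta> - \<theta> ^ q ^ Suc d)"
  by (simp add: lprod_def)

lemma theta_minus_power_nonzero: "\<theta> - \<theta> ^ q ^ Suc i \<noteq> 0"
proof -
  have "q ^ Suc i \<noteq> 1"
    using q_gt_2 by simp
  then have "coeff ([:0, 1:] - [:0, 1:] ^ q ^ Suc i :: 'a poly) 1 = 1"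
    by (simp add: monom_altdef[of 1, simplified, symmetric])
  then have "[:0, 1:] - [:0, 1:] ^ q ^ Suc i \<noteq> (0 :: 'a poly)"
    by auto
  from evA_theta_nonzero[OF this] show ?thesis
    by (simp add: evA_diff evA_power evA_X)
qed

lemma lprod_nonzero: "lprod d \<noteq> 0"
  using theta_minus_power_nonzero by (simp add: lprod_def)

lemma evA_lcar: "evA \<iota> (lcar d) \<theta> = lprod d"
proof (induction d)
  case 0
  then show ?case
    by (simp add: evA_one lprod_def)
next
  case (Suc d)
  then show ?case
    by (simp add: evA_mult evA_diff evA_power evA_X lprod_Suc mult.commute flip: q_eq_card)
qed

lemma ecar_theta_power:
  "alpha d \<noteq> 0 \<and> (\<forall>j\<ge>d. ecar d (\<theta> ^ j) = alpha d * lprod d * htheta d (j - d))"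
proof (induction d)
  case 0
  then show ?case
    by (simp add: lprod_def htheta_def thetas_def hcomplete_singleton)
next
  case (Suc d)
  define E where "E = ecar d (\<theta> ^ d)"
  have alpha_d: "alpha d \<noteq> 0"
    using Suc.IH by blast
  have E_eq: "E = alpha d * lprod d"
    using Suc.IH by (simp add: E_def)
  then have E_nonzero: "E \<noteq> 0"
    using alpha_d lprod_nonzero by simp
  have alpha_lprod_Suc: "alpha (Suc d) * lprod (Suc d) = - (\<theta> - \<theta> ^ q ^ Suc d)"
    using alpha_d lprod_nonzero[of d] by (simp add: lprod_Suc flip: E_def) (simp add: E_eq)
  have "ecar (Suc d) (\<theta> ^ j) = alpha (Suc d) * lprod (Suc d) * htheta (Suc d) (j - Suc d)"
    if "j \<ge> Suc d" for j
  proof -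
    define m where "m = j - Suc d"
    have m: "j - d = Suc m" "j - Suc d = m"
      using that by (simp_all add: m_def)
    have "ecar d (\<theta> ^ j) = E * htheta d (Suc m)"
      using Suc.IH that m by (simp add: E_eq)
    then have "ecar (Suc d) (\<theta> ^ j) = vanish (htheta d (Suc m))"
      using E_nonzero by (simp flip: E_def)
    also have "\<dots> = - (htheta d (Suc m) - htheta d (Suc m) ^ q)"
      by (simp add: vanish_eq)
    also have "\<dots> = - ((\<theta> - \<theta> ^ q ^ Suc d) * htheta (Suc d) m)"
      by (simp only: htheta_step)
    also have "\<dots> = alpha (Suc d) * lprod (Suc d) * htheta (Suc d) m"
      by (simp only: alpha_lprod_Suc mult_minus_left)
    finally show ?thesis
      by (simp only: m)
  qed
  moreover have "alpha (Suc d) \<noteq> 0"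
    using alpha_d E_nonzero by (simp flip: E_def)
  ultimately show ?case
    by blast
qed

lemma alpha_nonzero: "alpha d \<noteq> 0"
  using ecar_theta_power by blast

lemma ecar_pivot_eq: "ecar d (\<theta> ^ d) = alpha d * lprod d"
  using ecar_theta_power[of d] by simp

lemma ecar_pivot_nonzero: "ecar d (\<theta> ^ d) \<noteq> 0"
  by (simp add: ecar_pivot_eq alpha_nonzero lprod_nonzero)

lemma ecar_theta_power_ratio: "j \<ge> d \<Longrightarrow> ecar d (\<theta> ^ j) / ecar d (\<theta> ^ d) = htheta d (j - d)"
  using ecar_theta_power[of d] ecar_pivot_nonzero by (simp add: ecar_pivot_eq)

lemma ecar_add: "ecar d (x + y) = ecar d x + ecar d y"
  by (induction d arbitrary: x y) (simp_all add: add_divide_distrib vanish_add)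

lemma ecar_smult: "ecar d (\<iota> c * x) = \<iota> c * ecar d x"
proof (induction d arbitrary: x)
  case (Suc d)
  have "ecar (Suc d) (\<iota> c * x) = vanish (\<iota> c * (ecar d x / ecar d (\<theta> ^ d)))"
    by (simp add: Suc.IH)
  also have "\<dots> = \<iota> c * ecar (Suc d) x"
    by (simp only: vanish_smult ecar.simps)
  finally show ?case .
qed simp

lemma ecar_shift:
  "ecar d (x + \<iota> c * \<theta> ^ d) = ecar d (\<theta> ^ d) * (ecar d x / ecar d (\<theta> ^ d) + \<iota> c)"
  using ecar_pivot_nonzero[of d] by (simp add: ecar_add ecar_smult field_simps)

text \<open>Newton interpolation of \<open>t\<^sup>n\<close> at the nodes \<open>\<theta>\<^sup>q\<^sup>^\<^sup>k\<close>: the divided differences of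
  \<open>t\<^sup>n\<close> are complete homogeneous polynomials in the nodes.\<close>

lemma bcar_hcomplete_expansion:
  "bcar q i t \<theta> * hcomplete m (t # thetas i) = (\<Sum>k = i..i + m. bcar q k t \<theta> * htheta k (i + m - k))"
proof (induction m arbitrary: i)
  case (Suc m)
  have step: "hcomplete (Suc m) (t # thetas i)
      = htheta i (Suc m) + (t - \<theta> ^ q ^ i) * hcomplete m (t # thetas (Suc i))"
  proof -
    have "hcomplete (Suc m) (t # thetas i) - hcomplete (Suc m) (\<theta> ^ q ^ i # thetas i)
        = (t - \<theta> ^ q ^ i) * hcomplete m (t # \<theta> ^ q ^ i # thetas i)"
      by (rule hcomplete_diff)
    moreover have "hcomplete (Suc m) (\<theta> ^ q ^ i # thetas i) = htheta i (Suc m)"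
      by (simp only: htheta_def thetas_Suc_snoc hcomplete_snoc)
    moreover have "hcomplete m (t # \<theta> ^ q ^ i # thetas i) = hcomplete m (t # thetas (Suc i))"
      unfolding thetas_Suc_snoc by (rule hcomplete_cons_cong) (simp only: hcomplete_snoc)
    ultimately show ?thesis
      by (simp add: algebra_simps)
  qed
  have "bcar q i t \<theta> * hcomplete (Suc m) (t # thetas i)
      = bcar q i t \<theta> * htheta i (i + Suc m - i) + bcar q (Suc i) t \<theta> * hcomplete m (t # thetas (Suc i))"
    unfolding step bcar_Suc by (simp add: algebra_simps)
  also have "\<dots> = (\<Sum>k = i..i + Suc m. bcar q k t \<theta> * htheta k (i + Suc m - k))"
    using Suc.IH[of "Suc i"] by (simp add: sum.atLeast_Suc_atMost[of i])
  finally show ?case .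
qed simp

lemma power_eq_newton_expansion: "t ^ n = (\<Sum>k\<le>n. bcar q k t \<theta> * htheta k (n - k))"
  using bcar_hcomplete_expansion[of 0 t n]
  by (simp add: bcar_def thetas_def hcomplete_singleton atLeast0AtMost)

text \<open>\<open>interp L d\<close> is the combination of \<open>ecar 0, \<dots>, ecar (d - 1)\<close> that agrees with \<open>L\<close>
  on \<open>\<theta>\<^sup>0, \<dots>, \<theta>\<^sup>d\<^sup>-\<^sup>1\<close>; being \<open>\<bbbF>\<^sub>q\<close>-linear, it interpolates \<open>v(\<theta>) \<mapsto> L v\<close>
  on \<open>polys_below d\<close>.\<close>

fun interp :: "('a poly \<Rightarrow> 'b) \<Rightarrow> nat \<Rightarrow> 'b \<Rightarrow> 'b" where
  "interp L 0 x = 0"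
| "interp L (Suc d) x
    = interp L d x + (L (monom 1 d) - interp L d (\<theta> ^ d)) / ecar d (\<theta> ^ d) * ecar d x"

definition interp_coeff :: "('a poly \<Rightarrow> 'b) \<Rightarrow> nat \<Rightarrow> 'b" where
  "interp_coeff L d = (L (monom 1 d) - interp L d (\<theta> ^ d)) / ecar d (\<theta> ^ d)"

definition lambda_sum :: "('a poly \<Rightarrow> 'b) \<Rightarrow> nat \<Rightarrow> 'b" where
  "lambda_sum L d = (\<Sum>i<d. alpha i * interp_coeff L i)"

lemma lambda_sum_Suc: "lambda_sum L (Suc d) = lambda_sum L d + alpha d * interp_coeff L d"
  by (simp add: lambda_sum_def)

lemma interp_Suc: "interp L (Suc d) x = interp L d x + interp_coeff L d * ecar d x"
  by (simp add: interp_coeff_def)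

declare interp.simps(2) [simp del]

lemma interp_add: "interp L d (x + y) = interp L d x + interp L d y"
  by (induction d) (simp_all add: interp_Suc ecar_add algebra_simps)

lemma interp_smult: "interp L d (\<iota> c * x) = \<iota> c * interp L d x"
  by (induction d) (simp_all add: interp_Suc ecar_smult distrib_left mult.left_commute)

lemma monom_eq_interp: "L (monom 1 d) = interp L d (\<theta> ^ d) + interp_coeff L d * ecar d (\<theta> ^ d)"
  using ecar_pivot_nonzero[of d] by (simp add: interp_coeff_def)

definition closed_form :: "('a poly \<Rightarrow> 'b) \<Rightarrow> ('a poly \<Rightarrow> 'b) \<Rightarrow> nat \<Rightarrow> 'b \<Rightarrow> 'b \<Rightarrow> 'b \<Rightarrow> 'b" where
  "closed_form L K d x r s =
     (alpha d / ecar d x) ^ 2 * (r - interp L d x) * (s - interp K d x)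
     + alpha d / ecar d x * (lambda_sum L d * (s - interp K d x) + lambda_sum K d * (r - interp L d x))"

text \<open>Shifting \<open>x\<close> by \<open>\<iota> c * \<theta>\<^sup>d\<close> turns the closed form at level \<open>d\<close> into a quadratic
  polynomial in \<open>1 / (z + \<iota> c)\<close>, whose sum over \<open>c\<close> is the closed form at level \<open>Suc d\<close>.\<close>

lemma closed_form_shift_expansion:
  assumes "ecar (Suc d) x \<noteq> 0"
  defines "z \<equiv> ecar d x / ecar d (\<theta> ^ d)"
  obtains C A B where
    "\<And>c. closed_form L K d (x + \<iota> c * \<theta> ^ d) (r + \<iota> c * L (monom 1 d)) (s + \<iota> c * K (monom 1 d))
      = C + A / (z + \<iota> c) + B / (z + \<iota> c) ^ 2"
    and "- A / vanish z + B / vanish z ^ 2 = closed_form L K (Suc d) x r s"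
proof -
  define E where "E = ecar d (\<theta> ^ d)"
  define a where "a = alpha d"
  define M1 where "M1 = r - interp L (Suc d) x"
  define M2 where "M2 = s - interp K (Suc d) x"
  define k1 where "k1 = interp_coeff L d"
  define k2 where "k2 = interp_coeff K d"
  have E_nonzero: "E \<noteq> 0"
    by (simp add: E_def ecar_pivot_nonzero)
  have vanish_z: "vanish z \<noteq> 0" and ecar_Suc: "ecar (Suc d) x = vanish z"
    using assms(1) by (simp_all add: z_def)
  have ecar_shifted: "ecar d (x + \<iota> c * \<theta> ^ d) = E * (z + \<iota> c)" for c
    using ecar_shift[of d x c] by (simp add: z_def E_def)
  have interp_shifted: "t + \<iota> c * L' (monom 1 d) - interp L' d (x + \<iota> c * \<theta> ^ d)
      = (t - interp L' (Suc d) x) + interp_coeff L' d * E * (z + \<iota> c)" for t c L'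
    using E_nonzero monom_eq_interp[of L' d]
    by (simp add: z_def E_def interp_add interp_smult interp_Suc algebra_simps)
  show ?thesis
  proof (rule that)
    show "closed_form L K d (x + \<iota> c * \<theta> ^ d) (r + \<iota> c * L (monom 1 d)) (s + \<iota> c * K (monom 1 d))
      = (a ^ 2 * k1 * k2 + a * (lambda_sum L d * k2 + lambda_sum K d * k1))
        + a / E * ((lambda_sum K d + a * k2) * M1 + (lambda_sum L d + a * k1) * M2) / (z + \<iota> c)
        + (a / E) ^ 2 * M1 * M2 / (z + \<iota> c) ^ 2" for c
      unfolding closed_form_def ecar_shifted interp_shifted a_def[symmetric] M1_def[symmetric]
        M2_def[symmetric] k1_def[symmetric] k2_def[symmetric]
      by (rule expand_in_inverse_powers[OF E_nonzero vanish_nonzero_imp_shift_nonzero[OF vanish_z]])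
    have alpha_Suc: "alpha (Suc d) = - a / E"
      by (simp add: a_def E_def)
    show "- (a / E * ((lambda_sum K d + a * k2) * M1 + (lambda_sum L d + a * k1) * M2)) / vanish z
        + (a / E) ^ 2 * M1 * M2 / vanish z ^ 2 = closed_form L K (Suc d) x r s"
      unfolding closed_form_def ecar_Suc alpha_Suc lambda_sum_Suc M1_def[symmetric] M2_def[symmetric]
      using vanish_z E_nonzero by (simp add: a_def k1_def k2_def field_simps power2_eq_square)
  qed
qed

lemma sum_polys_below_affine_products:
  assumes "Fq_linear L" "Fq_linear K" "ecar d x \<noteq> 0"
  shows "(\<Sum>v\<in>polys_below d. (r + L v) * (s + K v) / (x + evA \<iota> v \<theta>) ^ 2) = closed_form L K d x r s"
  using assms(3)
proof (induction d arbitrary: x r s)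
  case 0
  then show ?case
    using Fq_linear_0[OF assms(1)] Fq_linear_0[OF assms(2)]
    by (simp add: closed_form_def lambda_sum_def evA_def power_divide)
next
  case (Suc d)
  define z where "z = ecar d x / ecar d (\<theta> ^ d)"
  obtain C A B where expansion: "\<And>c. closed_form L K d (x + \<iota> c * \<theta> ^ d)
        (r + \<iota> c * L (monom 1 d)) (s + \<iota> c * K (monom 1 d)) = C + A / (z + \<iota> c) + B / (z + \<iota> c) ^ 2"
    and closed_form_Suc: "- A / vanish z + B / vanish z ^ 2 = closed_form L K (Suc d) x r s"
    using closed_form_shift_expansion[OF Suc.prems] unfolding z_def by blast
  have vanish_z: "vanish z \<noteq> 0"
    using Suc.prems by (simp add: z_def)
  have slice: "(\<Sum>w\<in>polys_below d. (r + L (w + monom c d)) * (s + K (w + monom c d))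
      / (x + evA \<iota> (w + monom c d) \<theta>) ^ 2) = C + A / (z + \<iota> c) + B / (z + \<iota> c) ^ 2" for c
  proof -
    have "ecar d (x + \<iota> c * \<theta> ^ d) \<noteq> 0"
      using ecar_shift[of d x c] ecar_pivot_nonzero[of d] vanish_nonzero_imp_shift_nonzero[OF vanish_z]
      by (simp add: z_def)
    note IH = Suc.IH[OF this, of "r + \<iota> c * L (monom 1 d)" "s + \<iota> c * K (monom 1 d)"]
    have "x + evA \<iota> (w + monom c d) \<theta> = x + \<iota> c * \<theta> ^ d + evA \<iota> w \<theta>" for w
      by (simp add: evA_add evA_monom algebra_simps)
    then show ?thesis
      using IH by (simp add: Fq_linear_shift[OF assms(1)] Fq_linear_shift[OF assms(2)] expansion
          algebra_simps)
  qed
  show ?case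
    unfolding sum_polys_below_Suc slice closed_form_Suc[symmetric]
    by (rule sum_quadratic_in_inverse_shifts[OF vanish_z])
qed

lemma newton_remainder: "t ^ d - (\<Sum>i<d. bcar q i t \<theta> * htheta i (d - i)) = bcar q d t \<theta>"
  using power_eq_newton_expansion[of t d] by (simp add: lessThan_Suc_atMost[symmetric])

lemma interp_evA_theta_power:
  "d \<le> j \<Longrightarrow> interp (\<lambda>a. evA \<iota> a t) d (\<theta> ^ j) = (\<Sum>i<d. bcar q i t \<theta> * htheta i (j - i))"
proof (induction d arbitrary: j)
  case (Suc d)
  have "interp_coeff (\<lambda>a. evA \<iota> a t) d = bcar q d t \<theta> / ecar d (\<theta> ^ d)"
    using Suc.IH[of d] newton_remainder[of t d] by (simp add: interp_coeff_def evA_monom hom_one)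
  then have "interp_coeff (\<lambda>a. evA \<iota> a t) d * ecar d (\<theta> ^ j)
      = bcar q d t \<theta> * (ecar d (\<theta> ^ j) / ecar d (\<theta> ^ d))"
    by simp
  also have "\<dots> = bcar q d t \<theta> * htheta d (j - d)"
    using Suc.prems by (simp add: ecar_theta_power_ratio)
  finally have "interp_coeff (\<lambda>a. evA \<iota> a t) d * ecar d (\<theta> ^ j) = bcar q d t \<theta> * htheta d (j - d)" .
  then show ?case
    using Suc by (simp add: interp_Suc)
qed simp

lemma power_minus_interp_evA: "t ^ d - interp (\<lambda>a. evA \<iota> a t) d (\<theta> ^ d) = bcar q d t \<theta>"
  using interp_evA_theta_power[of d d t] newton_remainder[of t d] by simp

lemma alpha_div_pivot: "alpha d / ecar d (\<theta> ^ d) = 1 / lprod d"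
  using alpha_nonzero[of d] by (simp add: ecar_pivot_eq)

lemma lambda_sum_evA:
  "lambda_sum (\<lambda>a. evA \<iota> a t) d * (t - \<theta>) * lprod d = bcar q d t \<theta> * (\<theta> - \<theta> ^ q ^ d)"
proof (induction d)
  case 0
  then show ?case
    by (simp add: lambda_sum_def bcar_def)
next
  case (Suc d)
  have "alpha d * interp_coeff (\<lambda>a. evA \<iota> a t) d = bcar q d t \<theta> * (alpha d / ecar d (\<theta> ^ d))"
    using power_minus_interp_evA[of t d] by (simp add: interp_coeff_def evA_monom hom_one)
  then have lambda_sum_step:
    "lambda_sum (\<lambda>a. evA \<iota> a t) (Suc d) = lambda_sum (\<lambda>a. evA \<iota> a t) d + bcar q d t \<theta> / lprod d"
    by (simp add: lambda_sum_Suc alpha_div_pivot)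
  have "lambda_sum (\<lambda>a. evA \<iota> a t) (Suc d) * (t - \<theta>) * lprod (Suc d)
      = (lambda_sum (\<lambda>a. evA \<iota> a t) d * (t - \<theta>) * lprod d + bcar q d t \<theta> * (t - \<theta>))
        * (\<theta> - \<theta> ^ q ^ Suc d)"
    unfolding lambda_sum_step lprod_Suc using lprod_nonzero[of d] by (simp add: field_simps)
  also have "\<dots> = bcar q (Suc d) t \<theta> * (\<theta> - \<theta> ^ q ^ Suc d)"
    unfolding Suc bcar_Suc by (simp add: algebra_simps)
  finally show ?case .
qed

lemma lambda_sum_evA_eq:
  "t \<noteq> \<theta> \<Longrightarrow> lambda_sum (\<lambda>a. evA \<iota> a t) d = bcar q d t \<theta> * (\<theta> - \<theta> ^ q ^ d) / ((t - \<theta>) * lprod d)"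
  using lambda_sum_evA[of t d] lprod_nonzero[of d] by (simp add: field_simps)

lemma interp_zero: "interp (\<lambda>a. 0) d x = 0"
  by (induction d arbitrary: x) (simp_all add: interp_Suc interp_coeff_def)

lemma lambda_sum_zero: "lambda_sum (\<lambda>a. 0) d = 0"
  by (simp add: lambda_sum_def interp_coeff_def interp_zero)

lemma sum_Aplus_eq_sum_polys_below:
  "(\<Sum>a\<in>Aplus d. F (evA \<iota> a t) (evA \<iota> a u) (evA \<iota> a \<theta>))
    = (\<Sum>v\<in>polys_below d. F (t ^ d + evA \<iota> v t) (u ^ d + evA \<iota> v u) (\<theta> ^ d + evA \<iota> v \<theta>))"
  by (simp add: sum_Aplus evA_add evA_monom hom_one)

lemma sum_Aplus_evA:
  assumes "t \<noteq> \<theta>"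
  shows "(\<Sum>a\<in>Aplus d. evA \<iota> a t / (evA \<iota> a \<theta>) ^ 2)
    = bcar q d t \<theta> * (t - \<theta> ^ q ^ d) / ((t - \<theta>) * (evA \<iota> (lcar d) \<theta>) ^ 2)"
proof -
  have "(\<Sum>a\<in>Aplus d. evA \<iota> a t / (evA \<iota> a \<theta>) ^ 2)
      = (\<Sum>v\<in>polys_below d. (t ^ d + evA \<iota> v t) * (1 + 0) / (\<theta> ^ d + evA \<iota> v \<theta>) ^ 2)"
    using sum_Aplus_eq_sum_polys_below[where F = "\<lambda>x y z. x / z ^ 2" and u = t] by simp
  also have "\<dots> = bcar q d t \<theta> / lprod d ^ 2 + lambda_sum (\<lambda>a. evA \<iota> a t) d / lprod d"
    using sum_polys_below_affine_products[OF Fq_linear_evA Fq_linear_zero ecar_pivot_nonzero,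
        where r = "t ^ d" and s = 1]
    by (simp add: closed_form_def power_minus_interp_evA alpha_div_pivot interp_zero lambda_sum_zero
        power_divide)
  also have "\<dots> = bcar q d t \<theta> * (t - \<theta> ^ q ^ d) / ((t - \<theta>) * lprod d ^ 2)"
    using assms lprod_nonzero[of d] right_minus_eq[of _ \<theta>]
    by (simp add: lambda_sum_evA_eq field_simps power2_eq_square)
  finally show ?thesis
    by (simp add: evA_lcar)
qed

lemma sum_Aplus_evA_product:
  assumes "t1 \<noteq> \<theta>" "t2 \<noteq> \<theta>"
  shows "(\<Sum>a\<in>Aplus d. evA \<iota> a t1 * evA \<iota> a t2 / (evA \<iota> a \<theta>) ^ 2)
    = bcar q d t1 \<theta> * bcar q d t2 \<theta> / ((t1 - \<theta>) * (t2 - \<theta>) * (evA \<iota> (lcar d) \<theta>) ^ 2)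
      * ((t1 - \<theta>) * (t2 - \<theta>) + (t1 - \<theta>) * (\<theta> - \<theta> ^ q ^ d) + (t2 - \<theta>) * (\<theta> - \<theta> ^ q ^ d))"
proof -
  have "(\<Sum>a\<in>Aplus d. evA \<iota> a t1 * evA \<iota> a t2 / (evA \<iota> a \<theta>) ^ 2)
      = (\<Sum>v\<in>polys_below d. (t1 ^ d + evA \<iota> v t1) * (t2 ^ d + evA \<iota> v t2) / (\<theta> ^ d + evA \<iota> v \<theta>) ^ 2)"
    by (rule sum_Aplus_eq_sum_polys_below)
  also have "\<dots> = bcar q d t1 \<theta> * bcar q d t2 \<theta> / lprod d ^ 2
      + (lambda_sum (\<lambda>a. evA \<iota> a t1) d * bcar q d t2 \<theta>
         + lambda_sum (\<lambda>a. evA \<iota> a t2) d * bcar q d t1 \<theta>) / lprod d"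
    using sum_polys_below_affine_products[OF Fq_linear_evA Fq_linear_evA ecar_pivot_nonzero]
    by (simp add: closed_form_def power_minus_interp_evA alpha_div_pivot power_divide)
  also have "\<dots> = bcar q d t1 \<theta> * bcar q d t2 \<theta> / ((t1 - \<theta>) * (t2 - \<theta>) * lprod d ^ 2)
      * ((t1 - \<theta>) * (t2 - \<theta>) + (t1 - \<theta>) * (\<theta> - \<theta> ^ q ^ d) + (t2 - \<theta>) * (\<theta> - \<theta> ^ q ^ d))"
  proof -
    have common_denominator: "B / l ^ 2 + (B * D / (u1 * l) + B * D / (u2 * l)) / l
        = B / (u1 * u2 * l ^ 2) * (u1 * u2 + u1 * D + u2 * D)"
      if "u1 \<noteq> 0" "u2 \<noteq> 0" "l \<noteq> 0" for B D u1 u2 l :: 'b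
      using that by (simp add: field_simps power2_eq_square)
    have "lambda_sum (\<lambda>a. evA \<iota> a t1) d * bcar q d t2 \<theta> + lambda_sum (\<lambda>a. evA \<iota> a t2) d * bcar q d t1 \<theta>
        = bcar q d t1 \<theta> * bcar q d t2 \<theta> * (\<theta> - \<theta> ^ q ^ d) / ((t1 - \<theta>) * lprod d)
          + bcar q d t1 \<theta> * bcar q d t2 \<theta> * (\<theta> - \<theta> ^ q ^ d) / ((t2 - \<theta>) * lprod d)"
      using assms by (simp add: lambda_sum_evA_eq mult_ac)
    then show ?thesis
      using assms lprod_nonzero[of d] by (simp only: common_denominator right_minus_eq not_False_eq_True)
  qed
  finally show ?thesis
    by (simp add: evA_lcar)
qed

end

section \<open>The rational function fields\<close>

lemma to_fract_add: "to_fract (x + y) = to_fract x + (to_fract y :: 'a::idom fract)"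
  by (simp add: to_fract_def)

lemma to_fract_mult: "to_fract (x * y) = to_fract x * (to_fract y :: 'a::idom fract)"
  by (simp add: to_fract_def)

lemma to_fract_eq_iff: "to_fract x = (to_fract y :: 'a::idom fract) \<longleftrightarrow> x = y"
  by (simp add: to_fract_def eq_fract)

lemma to_fract_0: "to_fract 0 = (0 :: 'a::idom fract)"
  by (simp add: to_fract_def Zero_fract_def)

lemma to_fract_1: "to_fract 1 = (1 :: 'a::idom fract)"
  by (simp add: to_fract_def One_fract_def)

lemma (in Fq_embedding) evA_eq_hom:
  fixes g :: "'a poly \<Rightarrow> 'b"
  assumes "\<And>a b. g (a + b) = g a + g b" "\<And>a b. g (a * b) = g a * g b"
    and "\<And>c. g [:c:] = \<iota> c" "g [:0, 1:] = x"
  shows "evA \<iota> a x = g a"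
proof (induction a)
  case 0
  have "g 0 = 0"
    using assms(1)[of 0 0] by (metis add_cancel_left_right)
  then show ?case
    by (simp add: evA_def)
next
  case (pCons c a)
  have "pCons c a = [:c:] + [:0, 1:] * a"
    by simp
  then have "g (pCons c a) = \<iota> c + x * g a"
    by (simp only: assms)
  then show ?case
    using pCons.IH by (simp add: evA_def map_poly_pCons)
qed

lemma Fq_embedding_const1:
  assumes "card (UNIV :: 'a::{finite,field} set) > 2"
  shows "Fq_embedding (const1 :: 'a \<Rightarrow> 'a K1) (card (UNIV :: 'a set))"
proof
  show "const1 (x + y) = const1 x + const1 y" "const1 (x * y) = const1 x * const1 y" for x y :: 'a
    by (simp_all add: const1_def flip: to_fract_add to_fract_mult)
  show "const1 1 = 1"
    by (simp only: const1_def one_pCons[symmetric] to_fract_1)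
  show "inj (const1 :: 'a \<Rightarrow> 'a K1)"
    by (auto simp: inj_def const1_def to_fract_eq_iff)
qed (use assms in simp_all)

lemma Fq_transcendental_theta1:
  assumes "card (UNIV :: 'a::{finite,field} set) > 2"
  shows "Fq_transcendental (const1 :: 'a \<Rightarrow> 'a K1) (card (UNIV :: 'a set)) theta1"
proof -
  interpret Fq_embedding "const1 :: 'a \<Rightarrow> 'a K1" "card (UNIV :: 'a set)"
    by (rule Fq_embedding_const1[OF assms])
  have "evA const1 a theta1 = to_fract [:to_fract a:]" for a :: "'a poly"
    by (rule evA_eq_hom) (simp_all add: const1_def theta1_def mult.commute flip: to_fract_add to_fract_mult)
  then show ?thesis
    by unfold_locales (simp add: to_fract_0[symmetric] to_fract_eq_iff)
qed

lemma Fq_embedding_const2: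
  assumes "card (UNIV :: 'a::{finite,field} set) > 2"
  shows "Fq_embedding (const2 :: 'a \<Rightarrow> 'a K2) (card (UNIV :: 'a set))"
proof -
  interpret K1: Fq_embedding "const1 :: 'a \<Rightarrow> 'a K1" "card (UNIV :: 'a set)"
    by (rule Fq_embedding_const1[OF assms])
  show ?thesis
  proof
    show "const2 (x + y) = const2 x + const2 y" "const2 (x * y) = const2 x * const2 y" for x y :: 'a
      by (simp_all add: const2_def K1.hom_add K1.hom_mult mult.commute flip: to_fract_add to_fract_mult)
    show "const2 1 = 1"
      by (simp only: const2_def const1_def one_pCons[symmetric] to_fract_1)
    show "inj (const2 :: 'a \<Rightarrow> 'a K2)"
      by (auto simp: inj_def const2_def to_fract_eq_iff)
  qed (use assms in simp_all)
qed

lemma Fq_transcendental_theta2: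
  assumes "card (UNIV :: 'a::{finite,field} set) > 2"
  shows "Fq_transcendental (const2 :: 'a \<Rightarrow> 'a K2) (card (UNIV :: 'a set)) theta2"
proof -
  interpret Fq_embedding "const2 :: 'a \<Rightarrow> 'a K2" "card (UNIV :: 'a set)"
    by (rule Fq_embedding_const2[OF assms])
  have "evA const2 a theta2 = to_fract [:to_fract [:to_fract a:]:]" for a :: "'a poly"
    by (rule evA_eq_hom)
      (simp_all add: const1_def const2_def theta1_def theta2_def flip: to_fract_add to_fract_mult)
  then show ?thesis
    by unfold_locales (simp add: to_fract_0[symmetric] to_fract_eq_iff)
qed

lemma t1_1_ne_theta1: "t1_1 \<noteq> (theta1 :: 'a::field K1)"
  by (simp add: t1_1_def theta1_def to_fract_eq_iff)

lemma t1_2_ne_theta2: "t1_2 \<noteq> (theta2 :: 'a::field K2)"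
  by (simp add: t1_2_def theta2_def to_fract_eq_iff t1_1_ne_theta1)

lemma t2_2_ne_theta2: "t2_2 \<noteq> (theta2 :: 'a::field K2)"
  by (simp add: t2_2_def theta2_def to_fract_eq_iff)

theorem mainTheorem4:
  fixes d :: nat
  assumes "card (UNIV :: ('a::{finite,field}) set) > 2"
  shows
   "(\<Sum>a\<in>(Aplus d :: 'a poly set).
        evA const1 a t1_1 / (evA const1 a theta1)^2)
      = bcar (card (UNIV :: 'a set)) d t1_1 theta1 * (t1_1 - theta1 ^ (card (UNIV :: 'a set) ^ d))
        / ((t1_1 - theta1) * (evA const1 (lcar d :: 'a poly) theta1)^2)
    \<and>
    (\<Sum>a\<in>(Aplus d :: 'a poly set).
        evA const2 a t1_2 * evA const2 a t2_2 / (evA const2 a theta2)^2)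
      = bcar (card (UNIV :: 'a set)) d t1_2 theta2 * bcar (card (UNIV :: 'a set)) d t2_2 theta2
        / ((t1_2 - theta2) * (t2_2 - theta2) * (evA const2 (lcar d :: 'a poly) theta2)^2)
        * ((t1_2 - theta2) * (t2_2 - theta2)
           + (t1_2 - theta2) * (theta2 - theta2 ^ (card (UNIV :: 'a set) ^ d))
           + (t2_2 - theta2) * (theta2 - theta2 ^ (card (UNIV :: 'a set) ^ d)))"
  using Fq_transcendental.sum_Aplus_evA[OF Fq_transcendental_theta1[OF assms] t1_1_ne_theta1]
    Fq_transcendental.sum_Aplus_evA_product[OF Fq_transcendental_theta2[OF assms]
      t1_2_ne_theta2 t2_2_ne_theta2]
  by (rule conjI)

end
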